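(* Let $\Gamma$ be a $\mathbb Z^d$-periodic graph, $d\ge2$, with fundamental graph $\Gamma_*=(V_*,\mathcal E_* )$, $\nu=\#V_*$, and let $H=\Delta+Q$ with a real $\mathbb Z^d$-periodic potential $Q$, with spectral bands $\sigma_n=\sigma_n(H)=[\lambda_n^-,\lambda_n^+]$ (notation as in the context). (i) If $\Gamma$ is a loop graph, then $\lambda_n^-=\lambda_n(0)$ for all $n=1,\dots,\nu$. (ii) If $\Gamma$ is an exact loop graph with exact quasimomentum $\vartheta_0\in\mathbb T^d$, then $$\sigma_n=[\lambda_n^-,\lambda_n^+]=[\lambda_n(0),\lambda_n(\vartheta_0)]\quad\text{for all } n=1,\dots,\nu,\qquad \sum_{n=1}^\nu|\sigma_n|=2\beta,$$ where $\beta=\sum_{v\in V_*}\beta_v/\varkappa_v$ and $\beta_v$ is the number of bridges of $\Gamma_*$ starting at $v$. In particular, if moreover all bridges of $\Gamma_*$ are loops $(v,v)$ at one and the same vertex $v\in V_*$, then $$|\sigma(H)|=\sum_{n=1}^\nu|\sigma_n|=2\beta.$$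
   Context: Setting. $\Gamma=(V,\mathcal E)$ is a connected infinite graph, possibly with loops and multiple edges, on which $\mathbb Z^d$ acts freely by graph automorphisms ($v\mapsto v+m$), every vertex has finite degree, and the quotient graph $\Gamma_*=\Gamma/\mathbb Z^d=(V_*,\mathcal E_* )$ is finite, $\nu=\#V_*$. Each undirected edge is regarded as two oppositely oriented edges; $\mathcal A$ is the set of oriented edges of $\Gamma$, $\mathcal A_*=\mathcal A/\mathbb Z^d$. The degree $\varkappa_v$ is the number of oriented edges starting at $v$. $(\Delta f)(v)=f(v)-\sum_{(v,u)\in\mathcal A}\frac{1}{\sqrt{\varkappa_v\varkappa_u}}f(u)$ on $\ell^2(V)$, $H=\Delta+Q$ with $Q$ real and $Q(v+m)=Q(v)$. Edge indices. Fix a subtree $T$ of $\Gamma$ whose vertex set $V_0$ consists of $\nu$ pairwise non-$\mathbb Z^d$-equivalent vertices; write each $v\in V$ uniquely as $v=v_0+[v]$, $v_0\in V_0$, $[v]\in\mathbb Z^d$; the index of $\mathbf e=(u,v)$ is $\tau(\mathbf e)=[v]-[u]$, shift invariant and thus defined on $\mathcal A_*$. Bridges are edges with nonzero index; $\mathcal B_*$ is the set of bridges of $\Gamma_*$. Loop graphs. $\Gamma$ is a loop graph if every bridge of $\Gamma_*$ is a loop, i.e. of the form $(v,v)$, $v\in V_*$. A loop graph is an exact loop graph if there is $\vartheta_0\in\mathbb T^d$ with $\cos\langle\tau(\mathbf e),\vartheta_0\rangle=-1$ for all $\mathbf e\in\mathcal B_*$; such $\vartheta_0$ is called an exact quasimomentum.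 Fiber operators and bands. For $\vartheta\in\mathbb T^d=\mathbb R^d/(2\pi\mathbb Z)^d$: $(\Delta(\vartheta)f)(v)=f(v)-\sum_{\mathbf e=(v,u)\in\mathcal A_*}\frac{e^{i\langle\tau(\mathbf e),\vartheta\rangle}}{\sqrt{\varkappa_v\varkappa_u}}f(u)$ on $\ell^2(V_* )$, $H(\vartheta)=\Delta(\vartheta)+Q$; $H$ is unitarily equivalent to the direct integral of $H(\vartheta)$. $\lambda_1(\vartheta)\le\dots\le\lambda_\nu(\vartheta)$ are the eigenvalues of $H(\vartheta)$ and $\sigma_n(H)=[\lambda_n^-,\lambda_n^+]=\lambda_n(\mathbb T^d)$; $\sigma(H)=\bigcup_n\sigma_n(H)$. *)

theory Defs
  imports "HOL-Analysis.Analysis" "HOL-Computational_Algebra.Polynomial"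
begin

text \<open>
A Z^d-periodic graph is encoded through its fundamental (quotient) graph:
vertices of type 'v (finite, V_*), oriented edges of type 'e (finite, A_*),
maps src, tgt, the edge reversal rv and the edge index tau :: 'e => int^'d.
The periodic graph Gamma itself is the graph on 'v \<times> int^'d with an oriented
edge from (src e, m) to (tgt e, m + tau e) for every e and m.
\<close>

definition periodic_graph_data ::
  "('e::finite \<Rightarrow> 'v::finite) \<Rightarrow> ('e \<Rightarrow> 'v) \<Rightarrow> ('e \<Rightarrow> 'e) \<Rightarrow> ('e \<Rightarrow> int^'d::finite) \<Rightarrow> bool" where
  "periodic_graph_data src tgt rv tau \<longleftrightarrow>
     (\<forall>e. rv (rv e) = e \<and> rv e \<noteq> e \<and> src (rv e) = tgt e \<and> tgt (rv e) = src e
          \<and> tau (rv e) = - tau e)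
     \<comment> \<open>indices come from a subtree T whose vertices form a fundamental domain:
        the zero-index edges of the quotient graph contain a spanning tree\<close>
     \<and> (\<exists>T. T \<subseteq> {e. tau e = 0} \<and> (\<forall>e\<in>T. rv e \<in> T)
            \<and> (\<forall>u w. (u, w) \<in> ({(src e, tgt e) | e. e \<in> T})\<^sup>*))
     \<comment> \<open>the periodic graph Gamma is connected\<close>
     \<and> (\<forall>x y. (x, y) \<in> ({((src e, m), (tgt e, m + tau e)) | e m. True})\<^sup>*)"

definition deg :: "('e::finite \<Rightarrow> 'v) \<Rightarrow> 'v \<Rightarrow> nat" where
  "deg src v = card {e. src e = v}"

definition ip :: "int^'d::finite \<Rightarrow> real^'d \<Rightarrow> real" where
  "ip m \<theta> = (\<Sum>j\<in>UNIV. real_of_int (m $ j) * \<theta> $ j)"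

definition fiber_op ::
  "('e::finite \<Rightarrow> 'v::finite) \<Rightarrow> ('e \<Rightarrow> 'v) \<Rightarrow> ('e \<Rightarrow> int^'d::finite) \<Rightarrow> ('v \<Rightarrow> real)
    \<Rightarrow> real^'d \<Rightarrow> complex^'v^'v" where
  "fiber_op src tgt tau Q \<theta> = (\<chi> v u.
      (if v = u then complex_of_real (1 + Q v) else 0)
      - (\<Sum>e\<in>{e. src e = v \<and> tgt e = u}.
           cis (ip (tau e) \<theta>) / complex_of_real (sqrt (real (deg src v) * real (deg src u)))))"

definition char_poly_cart :: "complex^'n::finite^'n \<Rightarrow> complex poly" where
  "char_poly_cart A = det (\<chi> i j. (if i = j then [:0, 1:] else 0) - [:A $ i $ j:])"

text \<open>eigenvalues (with multiplicity) of a Hermitian matrix, in increasing order,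
  indexed from 1: lambda_1 <= ... <= lambda_nu\<close>
definition eigval :: "complex^'n::finite^'n \<Rightarrow> nat \<Rightarrow> real" where
  "eigval A n = sorted_list_of_multiset (image_mset Re (proots (char_poly_cart A))) ! (n - 1)"

definition band_fun ::
  "('e::finite \<Rightarrow> 'v::finite) \<Rightarrow> ('e \<Rightarrow> 'v) \<Rightarrow> ('e \<Rightarrow> int^'d::finite) \<Rightarrow> ('v \<Rightarrow> real)
    \<Rightarrow> nat \<Rightarrow> real^'d \<Rightarrow> real" where
  "band_fun src tgt tau Q n \<theta> = eigval (fiber_op src tgt tau Q \<theta>) n"

definition band ::
  "('e::finite \<Rightarrow> 'v::finite) \<Rightarrow> ('e \<Rightarrow> 'v) \<Rightarrow> ('e \<Rightarrow> int^'d::finite) \<Rightarrow> ('v \<Rightarrow> real)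
    \<Rightarrow> nat \<Rightarrow> real set" where
  "band src tgt tau Q n = range (band_fun src tgt tau Q n)"

definition band_min where "band_min src tgt tau Q n = Inf (band src tgt tau Q n)"
definition band_max where "band_max src tgt tau Q n = Sup (band src tgt tau Q n)"

definition spectrum_H ::
  "('e::finite \<Rightarrow> 'v::finite) \<Rightarrow> ('e \<Rightarrow> 'v) \<Rightarrow> ('e \<Rightarrow> int^'d::finite) \<Rightarrow> ('v \<Rightarrow> real) \<Rightarrow> real set" where
  "spectrum_H src tgt tau Q = (\<Union>n\<in>{1..CARD('v)}. band src tgt tau Q n)"

definition is_loop_graph :: "('e \<Rightarrow> 'v) \<Rightarrow> ('e \<Rightarrow> 'v) \<Rightarrow> ('e \<Rightarrow> int^'d::finite) \<Rightarrow> bool" where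
  "is_loop_graph src tgt tau \<longleftrightarrow> (\<forall>e. tau e \<noteq> 0 \<longrightarrow> src e = tgt e)"

definition exact_quasimomentum :: "('e \<Rightarrow> int^'d::finite) \<Rightarrow> real^'d \<Rightarrow> bool" where
  "exact_quasimomentum tau \<theta>0 \<longleftrightarrow> (\<forall>e. tau e \<noteq> 0 \<longrightarrow> cos (ip (tau e) \<theta>0) = -1)"

definition beta_const :: "('e::finite \<Rightarrow> 'v::finite) \<Rightarrow> ('e \<Rightarrow> int^'d::finite) \<Rightarrow> real" where
  "beta_const src tau = (\<Sum>v\<in>UNIV. real (card {e. src e = v \<and> tau e \<noteq> 0}) / real (deg src v))"

end

theory Submission
  imports Defs
begin

text \<open>
On a loop graph every bridge is a loop, and the edge reversal pairs each loop with one of opposite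
index, so the sines in the fiber operator cancel: \<open>H(\<theta>)\<close> is real symmetric and
\<open>H(\<theta>) = H(0) + diag \<delta>(\<theta>)\<close> with \<open>\<delta>\<^sub>v(\<theta>) = \<Sum>\<^sub>e (1 - cos \<langle>\<tau>(e), \<theta>\<rangle>) / \<kappa>\<^sub>v \<ge> 0\<close>, the sum
running over the bridges starting at \<open>v\<close> (\<open>bridge_potential\<close>). By the min-max principle each
\<open>\<lambda>\<^sub>n(\<theta>)\<close> is monotone and 1-Lipschitz in \<open>\<delta>(\<theta>)\<close>; hence \<open>\<lambda>\<^sub>n\<close> is minimal at \<open>\<theta> = 0\<close>, and
maximal at an exact quasimomentum \<open>\<theta>\<^sub>0\<close>, where every \<open>\<delta>\<^sub>v\<close> attains its maximum \<open>2\<beta>\<^sub>v/\<kappa>\<^sub>v\<close>.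
Along the segment \<open>t \<theta>\<^sub>0\<close> the band function is continuous, so \<open>\<sigma>\<^sub>n = [\<lambda>\<^sub>n(0), \<lambda>\<^sub>n(\<theta>\<^sub>0)]\<close>,
and the trace formula gives \<open>\<Sum>\<^sub>n |\<sigma>\<^sub>n| = tr H(\<theta>\<^sub>0) - tr H(0) = \<Sum>\<^sub>v \<delta>\<^sub>v(\<theta>\<^sub>0) = 2\<beta>\<close>.
If all bridges sit at one vertex \<open>w\<close>, then \<open>H(\<theta>\<^sub>0)\<close> and \<open>H(0)\<close> agree on the hyperplane
\<open>x\<^sub>w = 0\<close>, so interlacing gives \<open>\<lambda>\<^sub>n(\<theta>\<^sub>0) \<le> \<lambda>\<^sub>n\<^sub>+\<^sub>1(0)\<close> and the bands overlap only in endpoints.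
\<close>

section \<open>Orthonormal families and the Rayleigh quotient\<close>

lemma inner_matrix_vector_symmetric:
  fixes A :: "real^'n::finite^'n"
  assumes "transpose A = A"
  shows "(A *v x) \<bullet> y = x \<bullet> (A *v y)"
proof -
  have "A *v x = x v* A" using vector_transpose_matrix[of x A] assms by simp
  then show ?thesis by (simp add: dot_lmul_matrix)
qed

definition orthonormal_on :: "nat set \<Rightarrow> (nat \<Rightarrow> real^'n::finite) \<Rightarrow> bool" where
  "orthonormal_on I q \<longleftrightarrow> (\<forall>i\<in>I. \<forall>j\<in>I. q i \<bullet> q j = (if i = j then 1 else 0))"

lemma orthonormal_on_subset: "orthonormal_on I q \<Longrightarrow> J \<subseteq> I \<Longrightarrow> orthonormal_on J q"
  unfolding orthonormal_on_def by blast

lemma orthonormal_on_inj: "orthonormal_on I q \<Longrightarrow> inj_on q I"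
  unfolding orthonormal_on_def inj_on_def by (metis zero_neq_one)

lemma dim_span_orthonormal_on:
  assumes on: "orthonormal_on I q" and fin: "finite I"
  shows "dim (span (q ` I)) = card I"
proof -
  have ind: "independent (q ` I)"
  proof (rule pairwise_orthogonal_independent)
    show "pairwise orthogonal (q ` I)"
      using on unfolding orthonormal_on_def pairwise_def orthogonal_def by auto
    show "0 \<notin> q ` I"
    proof
      assume "0 \<in> q ` I" then obtain i where "i \<in> I" "q i = 0" by auto
      then show False using on unfolding orthonormal_on_def by (metis inner_zero_left zero_neq_one)
    qed
  qed
  then show ?thesis
    using dim_span_eq_card_independent[OF ind] card_image[OF orthonormal_on_inj[OF on]] by simp
qed

lemma dim_orthogonal_orthonormal_on:
  fixes q :: "nat \<Rightarrow> real^'n::finite"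
  assumes on: "orthonormal_on I q" and fin: "finite I"
  shows "dim {y. \<forall>i\<in>I. y \<bullet> q i = 0} = CARD('n) - card I"
proof -
  have eq: "{y. \<forall>i\<in>I. y \<bullet> q i = 0} = {y \<in> UNIV. \<forall>x\<in>span (q ` I). orthogonal x y}"
  proof (intro set_eqI iffI)
    fix y assume "y \<in> {y. \<forall>i\<in>I. y \<bullet> q i = 0}"
    then have "\<forall>x\<in>q ` I. orthogonal y x" by (auto simp: orthogonal_def)
    then show "y \<in> {y \<in> UNIV. \<forall>x\<in>span (q ` I). orthogonal x y}"
      using orthogonal_to_span orthogonal_commute by blast
  next
    fix y assume "y \<in> {y \<in> UNIV. \<forall>x\<in>span (q ` I). orthogonal x y}"
    then show "y \<in> {y. \<forall>i\<in>I. y \<bullet> q i = 0}"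
      by (auto simp: orthogonal_def) (metis inner_commute span_base imageI)
  qed
  have "dim {y \<in> UNIV. \<forall>x\<in>span (q ` I). orthogonal x y} + dim (span (q ` I)) = dim (UNIV :: (real^'n) set)"
    by (rule dim_subspace_orthogonal_to_vectors) auto
  then show ?thesis using dim_span_orthonormal_on[OF on fin] eq by simp
qed

lemma inner_sum_orthonormal_on:
  assumes on: "orthonormal_on I q" and fin: "finite I"
  shows "(\<Sum>i\<in>I. c i *\<^sub>R q i) \<bullet> (\<Sum>i\<in>I. d i *\<^sub>R q i) = (\<Sum>i\<in>I. c i * d i)"
proof -
  have "(\<Sum>i\<in>I. c i *\<^sub>R q i) \<bullet> (\<Sum>j\<in>I. d j *\<^sub>R q j) = (\<Sum>i\<in>I. c i * (q i \<bullet> (\<Sum>j\<in>I. d j *\<^sub>R q j)))"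
    by (simp add: inner_sum_left)
  also have "\<dots> = (\<Sum>i\<in>I. \<Sum>j\<in>I. c i * d j * (q i \<bullet> q j))"
    by (simp add: inner_sum_right sum_distrib_left mult.assoc)
  also have "\<dots> = (\<Sum>i\<in>I. \<Sum>j\<in>I. if i = j then c i * d j else 0)"
    using on unfolding orthonormal_on_def by (intro sum.cong refl) auto
  also have "\<dots> = (\<Sum>i\<in>I. c i * d i)" using fin by (simp add: sum.delta)
  finally show ?thesis .
qed

lemma quadratic_nonneg_imp_linear_coeff_zero:
  fixes a b :: real
  assumes nonneg: "\<And>t. 0 \<le> 2 * t * a + t\<^sup>2 * b" and "a \<ge> 0"
  shows "a = 0"
proof (rule ccontr)
  assume "a \<noteq> 0" then have a: "a > 0" using assms(2) by simp
  define s where "s = \<bar>b\<bar> + 1"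
  have s: "s > 0" unfolding s_def by simp
  define t where "t = - a / s"
  have "t\<^sup>2 * b \<le> t\<^sup>2 * \<bar>b\<bar>" by (simp add: mult_left_mono)
  also have "\<dots> < t\<^sup>2 * s"
    using a s unfolding s_def t_def by (intro mult_strict_left_mono) auto
  also have "t\<^sup>2 * s = a\<^sup>2 / s" using s unfolding t_def by (simp add: power2_eq_square field_simps)
  finally have "2 * t * a + t\<^sup>2 * b < 2 * t * a + a\<^sup>2 / s" by simp
  also have "2 * t * a + a\<^sup>2 / s = - (a\<^sup>2 / s)" using s unfolding t_def by (simp add: power2_eq_square field_simps)
  also have "\<dots> < 0" using a s by simp
  finally show False using nonneg[of t] by simp
qed

lemma rayleigh_quotient_scaleR:
  fixes A :: "real^'n::finite^'n"
  assumes "x \<noteq> 0"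
  shows "(x /\<^sub>R norm x) \<bullet> (A *v (x /\<^sub>R norm x)) = (x \<bullet> (A *v x)) / (x \<bullet> x)"
  by (simp add: matrix_vector_mult_scaleR power2_norm_eq_inner[symmetric] power2_eq_square field_simps)

lemma rayleigh_min_exists:
  fixes A :: "real^'n::finite^'n"
  assumes W: "subspace W" and x0: "x0 \<in> W" "x0 \<noteq> 0"
  obtains v where "v \<in> W" "norm v = 1" "\<And>y. y \<in> W \<Longrightarrow> norm y = 1 \<Longrightarrow> v \<bullet> (A *v v) \<le> y \<bullet> (A *v y)"
proof -
  define S where "S = W \<inter> sphere 0 1"
  have "compact S" unfolding S_def by (intro closed_Int_compact closed_subspace W compact_sphere)
  moreover have "x0 /\<^sub>R norm x0 \<in> S" unfolding S_def using x0 W by (simp add: subspace_scale)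
  then have "S \<noteq> {}" by blast
  moreover have "continuous_on S (\<lambda>x. x \<bullet> (A *v x))"
    by (intro continuous_on_inner continuous_on_id matrix_vector_mult_linear_continuous_on)
  ultimately have "\<exists>v\<in>S. \<forall>y\<in>S. v \<bullet> (A *v v) \<le> y \<bullet> (A *v y)"
    by (rule continuous_attains_inf)
  then show ?thesis using that unfolding S_def by auto
qed

text \<open>A minimiser of the Rayleigh quotient on an invariant subspace is an eigenvector: the residual
  r = A v - \<mu> v lies in the subspace and is orthogonal to v, and perturbing v in direction r
  decreases the quotient to first order unless r = 0.\<close>
lemma rayleigh_minimizer_eigenvector:
  fixes A :: "real^'n::finite^'n"
  assumes sym: "transpose A = A" and W: "subspace W" and AW: "\<And>y. y \<in> W \<Longrightarrow> A *v y \<in> W"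
    and vW: "v \<in> W" and vn: "norm v = 1"
    and vmin: "\<And>y. y \<in> W \<Longrightarrow> norm y = 1 \<Longrightarrow> v \<bullet> (A *v v) \<le> y \<bullet> (A *v y)"
  shows "A *v v = (v \<bullet> (A *v v)) *\<^sub>R v"
proof -
  define \<mu> where "\<mu> = v \<bullet> (A *v v)"
  define r where "r = A *v v - \<mu> *\<^sub>R v"
  have vv: "v \<bullet> v = 1" using vn by (simp add: norm_eq_1)
  have rW: "r \<in> W" unfolding r_def using AW[OF vW] vW W by (simp add: subspace_diff subspace_scale)
  have rv: "r \<bullet> v = 0"
    unfolding r_def \<mu>_def using vv by (simp add: inner_diff_left inner_diff_right inner_commute)
  have rAv: "r \<bullet> (A *v v) = r \<bullet> r"
  proof -
    have "v \<bullet> (A *v v) = \<mu>" "(A *v v) \<bullet> v = \<mu>" unfolding \<mu>_def by (simp_all add: inner_commute)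
    then show ?thesis unfolding r_def using vv
      by (simp add: inner_diff_left inner_diff_right power2_eq_square algebra_simps)
  qed
  have "0 \<le> 2 * t * (r \<bullet> r) + t\<^sup>2 * (r \<bullet> (A *v r) - \<mu> * (r \<bullet> r))" for t
  proof -
    define y where "y = v + t *\<^sub>R r"
    have yy: "y \<bullet> y = 1 + t\<^sup>2 * (r \<bullet> r)"
      unfolding y_def using vv rv by (simp add: inner_add_left inner_add_right inner_commute power2_eq_square)
    then have ypos: "y \<bullet> y > 0" by (simp add: add_pos_nonneg)
    then have "y \<noteq> 0" by auto
    moreover have "y \<in> W" unfolding y_def using vW rW W by (simp add: subspace_add subspace_scale)
    ultimately have "\<mu> \<le> (y /\<^sub>R norm y) \<bullet> (A *v (y /\<^sub>R norm y))"
      unfolding \<mu>_def using W by (intro vmin) (auto simp: subspace_scale)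
    then have "\<mu> * (y \<bullet> y) \<le> y \<bullet> (A *v y)"
      using ypos rayleigh_quotient_scaleR[OF \<open>y \<noteq> 0\<close>] by (simp add: pos_le_divide_eq)
    moreover have "v \<bullet> (A *v r) = r \<bullet> (A *v v)"
      using inner_matrix_vector_symmetric[OF sym, of r v] by (simp add: inner_commute)
    then have "y \<bullet> (A *v y) = \<mu> + 2 * t * (r \<bullet> r) + t\<^sup>2 * (r \<bullet> (A *v r))"
      unfolding y_def by (simp add: matrix_vector_right_distrib matrix_vector_mult_scaleR inner_add_left
          inner_add_right rAv \<mu>_def power2_eq_square algebra_simps)
    ultimately show ?thesis using yy by (simp add: algebra_simps)
  qed
  then have "r \<bullet> r = 0" by (rule quadratic_nonneg_imp_linear_coeff_zero) simp
  then show ?thesis unfolding r_def \<mu>_def by simp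
qed

lemma symmetric_matrix_orthogonal_eigenvector:
  fixes A :: "real^'n::finite^'n"
  assumes "transpose A = A" and "A *v q = \<mu> *\<^sub>R q" and "y \<bullet> q = 0"
  shows "(A *v y) \<bullet> q = 0"
  using inner_matrix_vector_symmetric[OF assms(1), of y q] assms(2,3) by simp

section \<open>Variational eigenvalues of real symmetric matrices\<close>

text \<open>Eigenvalues are constructed variationally and only afterwards identified with the roots of
  the characteristic polynomial that define \<open>eigval\<close> (\<open>eigval_rayleigh_eigensystem\<close>).\<close>
definition rayleigh_eigensystem ::
  "nat \<Rightarrow> real^'n::finite^'n \<Rightarrow> (nat \<Rightarrow> real^'n) \<Rightarrow> (nat \<Rightarrow> real) \<Rightarrow> bool" where
  "rayleigh_eigensystem m A q \<mu> \<longleftrightarrow> orthonormal_on {1..m} q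
     \<and> (\<forall>i\<in>{1..m}. A *v q i = \<mu> i *\<^sub>R q i)
     \<and> (\<forall>k\<in>{1..m}. \<forall>x. norm x = 1 \<and> (\<forall>i\<in>{1..<k}. x \<bullet> q i = 0) \<longrightarrow> \<mu> k \<le> x \<bullet> (A *v x))"

lemma rayleigh_eigensystem_exists:
  fixes A :: "real^'n::finite^'n"
  assumes sym: "transpose A = A"
  shows "m \<le> CARD('n) \<Longrightarrow> \<exists>q \<mu>. rayleigh_eigensystem m A q \<mu>"
proof (induction m)
  case 0 show ?case by (auto simp: rayleigh_eigensystem_def orthonormal_on_def)
next
  case (Suc m)
  then obtain q \<mu> where orth: "orthonormal_on {1..m} q" and eig: "\<forall>i\<in>{1..m}. A *v q i = \<mu> i *\<^sub>R q i"
    and mini: "\<forall>k\<in>{1..m}. \<forall>x. norm x = 1 \<and> (\<forall>i\<in>{1..<k}. x \<bullet> q i = 0) \<longrightarrow> \<mu> k \<le> x \<bullet> (A *v x)"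
    unfolding rayleigh_eigensystem_def by auto
  define W where "W = {x::real^'n. \<forall>i\<in>{1..m}. x \<bullet> q i = 0}"
  have W: "subspace W" unfolding W_def subspace_def by (auto simp: inner_add_left)
  have "dim W = CARD('n) - m"
    unfolding W_def using dim_orthogonal_orthonormal_on[OF orth] by simp
  then have "\<not> W \<subseteq> {0}" using Suc.prems dim_subset[of W "{0}"] by auto
  then obtain x0 where "x0 \<in> W" "x0 \<noteq> 0" by auto
  then obtain v where vW: "v \<in> W" and vn: "norm v = 1"
    and vmin: "\<And>y. y \<in> W \<Longrightarrow> norm y = 1 \<Longrightarrow> v \<bullet> (A *v v) \<le> y \<bullet> (A *v y)"
    using rayleigh_min_exists[OF W] by blast
  have AW: "A *v y \<in> W" if "y \<in> W" for y
    using that eig symmetric_matrix_orthogonal_eigenvector[OF sym] unfolding W_def by blast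
  have Av: "A *v v = (v \<bullet> (A *v v)) *\<^sub>R v"
    by (rule rayleigh_minimizer_eigenvector[OF sym W AW vW vn vmin])
  have vv: "v \<bullet> v = 1" using vn by (simp add: norm_eq_1)
  have vq: "v \<bullet> q i = 0" if "i \<in> {1..m}" for i using vW that unfolding W_def by simp
  define q' where "q' = q(Suc m := v)"
  define \<mu>' where "\<mu>' = \<mu>(Suc m := v \<bullet> (A *v v))"
  have "rayleigh_eigensystem (Suc m) A q' \<mu>'"
    unfolding rayleigh_eigensystem_def
  proof (intro conjI ballI allI impI)
    show "orthonormal_on {1..Suc m} q'"
      using orth vv vq unfolding orthonormal_on_def q'_def by (auto simp: inner_commute)
    show "A *v q' i = \<mu>' i *\<^sub>R q' i" if "i \<in> {1..Suc m}" for i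
      using eig Av that unfolding q'_def \<mu>'_def by (auto simp: le_Suc_eq)
    fix k x assume k: "k \<in> {1..Suc m}" and x: "norm x = 1 \<and> (\<forall>i\<in>{1..<k}. x \<bullet> q' i = 0)"
    show "\<mu>' k \<le> x \<bullet> (A *v x)"
    proof (cases "k = Suc m")
      case True
      then have "x \<in> W" using x unfolding W_def q'_def by auto
      then show ?thesis using vmin x True unfolding \<mu>'_def by simp
    next
      case False
      then have "k \<in> {1..m}" "\<forall>i\<in>{1..<k}. x \<bullet> q i = 0" using x k unfolding q'_def by auto
      then show ?thesis using mini x False unfolding \<mu>'_def by auto
    qed
  qed
  then show ?case by blast
qed

lemma rayleigh_eigensystem_sorted:
  assumes sd: "rayleigh_eigensystem m A q \<mu>" and "1 \<le> i" "i \<le> j" "j \<le> m"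
  shows "\<mu> i \<le> \<mu> j"
  using assms(3,4)
proof (induction j rule: dec_induct)
  case base then show ?case by simp
next
  case (step j)
  have on: "orthonormal_on {1..m} q" and eig: "\<forall>i\<in>{1..m}. A *v q i = \<mu> i *\<^sub>R q i"
    and mini: "\<forall>k\<in>{1..m}. \<forall>x. norm x = 1 \<and> (\<forall>i\<in>{1..<k}. x \<bullet> q i = 0) \<longrightarrow> \<mu> k \<le> x \<bullet> (A *v x)"
    using sd unfolding rayleigh_eigensystem_def by auto
  have qq: "q (Suc j) \<bullet> q (Suc j) = 1" using on step.prems unfolding orthonormal_on_def by auto
  then have "norm (q (Suc j)) = 1" by (simp add: norm_eq_1)
  moreover have "\<forall>l\<in>{1..<j}. q (Suc j) \<bullet> q l = 0" using on step.prems unfolding orthonormal_on_def by auto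
  ultimately have "\<mu> j \<le> q (Suc j) \<bullet> (A *v q (Suc j))" using mini step assms(2) by auto
  also have "\<dots> = \<mu> (Suc j)" using eig step.prems qq by simp
  finally show ?case using step by simp
qed

lemma matrix_eqI: "(\<And>i j. A $ i $ j = B $ i $ j) \<Longrightarrow> A = B"
  by (simp add: vec_eq_iff)

definition diag_matrix :: "('n::finite \<Rightarrow> 'a::zero) \<Rightarrow> 'a^'n^'n" where
  "diag_matrix d = (\<chi> i j. if i = j then d i else 0)"

lemma inner_add_diag_matrix:
  fixes A :: "real^'n::finite^'n"
  shows "x \<bullet> ((A + diag_matrix d) *v x) = x \<bullet> (A *v x) + (\<Sum>i\<in>UNIV. d i * (x $ i * x $ i))"
proof -
  have "diag_matrix d *v x = (\<chi> i. d i * x $ i)"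
  proof (subst vec_eq_iff, intro allI)
    fix i
    have "(diag_matrix d *v x) $ i = (\<Sum>j\<in>UNIV. if i = j then d i * x $ j else 0)"
      unfolding diag_matrix_def matrix_vector_mult_def by (simp only: vec_lambda_beta) (intro sum.cong, auto)
    then show "(diag_matrix d *v x) $ i = (\<chi> i. d i * x $ i) $ i" by simp
  qed
  then show ?thesis
    by (simp add: matrix_vector_mult_add_rdistrib inner_add_right inner_vec_def algebra_simps sum.distrib)
qed

definition of_real_matrix :: "real^'n::finite^'n \<Rightarrow> complex^'n^'n" where
  "of_real_matrix A = (\<chi> i j. complex_of_real (A $ i $ j))"

lemma rayleigh_eigensystem_diagonalization:
  fixes A :: "real^'n::finite^'n"
  assumes sd: "rayleigh_eigensystem CARD('n) A q \<mu>"
  obtains g :: "'n \<Rightarrow> nat" and P :: "real^'n^'n"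
  where "bij_betw g UNIV {1..CARD('n)}" "P ** transpose P = mat 1" "transpose P ** P = mat 1"
    "A = P ** diag_matrix (\<mu> \<circ> g) ** transpose P"
proof -
  let ?N = "CARD('n)"
  have on: "orthonormal_on {1..?N} q" and eig: "\<forall>i\<in>{1..?N}. A *v q i = \<mu> i *\<^sub>R q i"
    using sd unfolding rayleigh_eigensystem_def by auto
  obtain h where "bij_betw h {1..?N} (UNIV :: 'n set)"
    using ex_bij_betw_nat_finite_1[of "UNIV :: 'n set"] by auto
  from bij_betw_inv[OF this] obtain g :: "'n \<Rightarrow> nat" where g: "bij_betw g UNIV {1..?N}" by blast
  have gin: "g j \<in> {1..?N}" for j using g by (auto simp: bij_betw_def)
  have ginj: "g j = g j' \<longleftrightarrow> j = j'" for j j' using g by (auto simp: bij_betw_def inj_on_def)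
  define P :: "real^'n^'n" where "P = (\<chi> i j. q (g j) $ i)"
  have PtP: "transpose P ** P = mat 1"
  proof (rule matrix_eqI)
    fix j j'
    have "(transpose P ** P) $ j $ j' = q (g j) \<bullet> q (g j')"
      by (simp add: matrix_matrix_mult_def transpose_def P_def inner_vec_def)
    also have "\<dots> = (if j = j' then 1 else 0)" using on gin ginj unfolding orthonormal_on_def by auto
    finally show "(transpose P ** P) $ j $ j' = mat 1 $ j $ j'" by (simp add: mat_def)
  qed
  then have PPt: "P ** transpose P = mat 1" by (rule matrix_left_right_inverse1)
  have AP: "A ** P = P ** diag_matrix (\<mu> \<circ> g)"
  proof (rule matrix_eqI)
    fix i j
    have "(A ** P) $ i $ j = (A *v q (g j)) $ i"
      by (simp add: matrix_matrix_mult_def matrix_vector_mult_def P_def)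
    also have "\<dots> = \<mu> (g j) * q (g j) $ i" using eig gin by simp
    also have "\<dots> = (P ** diag_matrix (\<mu> \<circ> g)) $ i $ j"
      by (simp add: matrix_matrix_mult_def diag_matrix_def P_def if_distrib cong: if_cong)
    finally show "(A ** P) $ i $ j = (P ** diag_matrix (\<mu> \<circ> g)) $ i $ j" .
  qed
  have "A = A ** (P ** transpose P)" using PPt by simp
  also have "\<dots> = P ** diag_matrix (\<mu> \<circ> g) ** transpose P" by (metis matrix_mul_assoc AP)
  finally show ?thesis using that g PPt PtP by blast
qed

lemma det_orthogonal_congruence:
  fixes P D :: "'a::comm_ring_1^'n::finite^'n"
  assumes "P ** transpose P = mat 1"
  shows "det (P ** D ** transpose P) = det D"
proof -
  have "det P * det (transpose P) = 1" using assms by (metis det_mul det_I)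
  then show ?thesis by (simp add: det_mul algebra_simps)
qed

lemma char_poly_cart_orthogonal_diagonalization:
  fixes A P :: "real^'n::finite^'n" and c :: "'n \<Rightarrow> real"
  assumes PPt: "P ** transpose P = mat 1" and AP: "A = P ** diag_matrix c ** transpose P"
  shows "char_poly_cart (of_real_matrix A) = (\<Prod>i\<in>UNIV. [:- complex_of_real (c i), 1:])"
proof -
  have Pcol: "(\<Sum>k\<in>UNIV. P $ i $ k * P $ j $ k) = (if i = j then 1 else 0)" for i j
  proof -
    have "(P ** transpose P) $ i $ j = (\<Sum>k\<in>UNIV. P $ i $ k * P $ j $ k)"
      by (simp add: matrix_matrix_mult_def transpose_def)
    then show ?thesis using PPt by (simp add: mat_def)
  qed
  have Aij: "A $ i $ j = (\<Sum>k\<in>UNIV. P $ i $ k * c k * P $ j $ k)" for i j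
  proof -
    have "(P ** diag_matrix c) $ i $ k = P $ i $ k * c k" for k
      by (simp add: matrix_matrix_mult_def diag_matrix_def if_distrib cong: if_cong)
    then show ?thesis using AP by (simp add: matrix_matrix_mult_def transpose_def)
  qed
  define X :: "complex poly" where "X = [:0, 1:]"
  define Pc :: "complex poly^'n^'n" where "Pc = (\<chi> i j. [:complex_of_real (P $ i $ j):])"
  define D :: "complex poly^'n^'n" where "D = diag_matrix (\<lambda>i. X - [:complex_of_real (c i):])"
  define M :: "complex poly^'n^'n" where
    "M = (\<chi> i j. (if i = j then [:0, 1:] else 0) - [:of_real_matrix A $ i $ j:])"
  have "M = Pc ** D ** transpose Pc"
  proof (rule matrix_eqI)
    fix i j
    have PcD: "(Pc ** D) $ i $ k = [:complex_of_real (P $ i $ k):] * (X - [:complex_of_real (c k):])" for k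
      unfolding Pc_def D_def diag_matrix_def by (simp add: matrix_matrix_mult_def if_distrib cong: if_cong)
    have "(Pc ** D ** transpose Pc) $ i $ j
        = (\<Sum>k\<in>UNIV. [:complex_of_real (P $ i $ k):] * (X - [:complex_of_real (c k):]) * [:complex_of_real (P $ j $ k):])"
    proof -
      have "(Pc ** D ** transpose Pc) $ i $ j = (\<Sum>k\<in>UNIV. (Pc ** D) $ i $ k * transpose Pc $ k $ j)"
        unfolding matrix_matrix_mult_def[of "Pc ** D"] by simp
      then show ?thesis unfolding PcD by (simp add: transpose_def Pc_def)
    qed
    also have "\<dots> = (\<Sum>k\<in>UNIV. X * [:complex_of_real (P $ i $ k * P $ j $ k):]
                    - [:complex_of_real (P $ i $ k * c k * P $ j $ k):])"
      by (intro sum.cong refl) (simp only: mult_to_poly of_real_mult algebra_simps)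
    also have "\<dots> = X * [:complex_of_real (\<Sum>k\<in>UNIV. P $ i $ k * P $ j $ k):]
                    - [:complex_of_real (\<Sum>k\<in>UNIV. P $ i $ k * c k * P $ j $ k):]"
      by (simp only: sum_subtractf sum_distrib_left sum_to_poly[symmetric] of_real_sum)
    also have "\<dots> = M $ i $ j"
      unfolding Pcol Aij[symmetric] M_def of_real_matrix_def X_def by simp
    finally show "M $ i $ j = (Pc ** D ** transpose Pc) $ i $ j" by simp
  qed
  moreover have "Pc ** transpose Pc = mat 1"
  proof (rule matrix_eqI)
    fix i j
    have "(Pc ** transpose Pc) $ i $ j = [:complex_of_real (\<Sum>k\<in>UNIV. P $ i $ k * P $ j $ k):]"
      by (simp add: matrix_matrix_mult_def transpose_def Pc_def mult_to_poly sum_to_poly mult.commute)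
    then show "(Pc ** transpose Pc) $ i $ j = mat 1 $ i $ j" unfolding Pcol by (simp add: mat_def)
  qed
  ultimately have "det M = det D" by (simp add: det_orthogonal_congruence)
  also have "det D = (\<Prod>i\<in>UNIV. X - [:complex_of_real (c i):])"
    unfolding D_def by (subst det_diagonal) (simp_all add: diag_matrix_def)
  finally show ?thesis unfolding char_poly_cart_def M_def X_def by simp
qed

lemma proots_prod_linear_factors:
  "proots (\<Prod>k\<in>{1..n}. [:- c k, 1:]) = mset (map c [1..<Suc n])"
proof (induction n)
  case 0 then show ?case by simp
next
  case (Suc n)
  have ne: "(\<Prod>k\<in>{1..n}. [:- c k, 1:]) \<noteq> 0" by (simp add: prod_zero_iff)
  have "(\<Prod>k\<in>{1..Suc n}. [:- c k, 1:]) = (\<Prod>k\<in>{1..n}. [:- c k, 1:]) * [:- c (Suc n), 1:]"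
    by (simp add: prod.cl_ivl_Suc)
  then have "proots (\<Prod>k\<in>{1..Suc n}. [:- c k, 1:]) = proots (\<Prod>k\<in>{1..n}. [:- c k, 1:]) + {# c (Suc n) #}"
    using proots_mult[OF ne, of "[:- c (Suc n), 1:]"] by (simp add: proots_linear_factor)
  then show ?case using Suc by simp
qed

lemma eigval_rayleigh_eigensystem:
  fixes A :: "real^'n::finite^'n"
  assumes sd: "rayleigh_eigensystem CARD('n) A q \<mu>" and k: "k \<in> {1..CARD('n)}"
  shows "eigval (of_real_matrix A) k = \<mu> k"
proof -
  let ?N = "CARD('n)"
  obtain g :: "'n \<Rightarrow> nat" and P :: "real^'n^'n" where g: "bij_betw g UNIV {1..?N}"
    and PPt: "P ** transpose P = mat 1" and AP: "A = P ** diag_matrix (\<mu> \<circ> g) ** transpose P"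
    using rayleigh_eigensystem_diagonalization[OF sd] by blast
  have "char_poly_cart (of_real_matrix A) = (\<Prod>i\<in>UNIV. [:- complex_of_real (\<mu> (g i)), 1:])"
    using char_poly_cart_orthogonal_diagonalization[OF PPt AP] by simp
  also have "\<dots> = (\<Prod>k\<in>{1..?N}. [:- complex_of_real (\<mu> k), 1:])"
    using prod.reindex_bij_betw[OF g, of "\<lambda>k. [:- complex_of_real (\<mu> k), 1:]"] by simp
  finally have "proots (char_poly_cart (of_real_matrix A)) = mset (map (complex_of_real \<circ> \<mu>) [1..<Suc ?N])"
    using proots_prod_linear_factors[of "complex_of_real \<circ> \<mu>" ?N] by simp
  then have roots: "image_mset Re (proots (char_poly_cart (of_real_matrix A))) = mset (map \<mu> [1..<Suc ?N])"
    by (simp only: mset_map[symmetric] map_map) (simp add: comp_def)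
  have "sorted (map \<mu> [1..<Suc ?N])"
    by (rule sorted_map_mono[OF sorted_upt])
      (auto simp: mono_on_def intro: rayleigh_eigensystem_sorted[OF sd])
  then have "sorted_list_of_multiset (image_mset Re (proots (char_poly_cart (of_real_matrix A))))
      = map \<mu> [1..<Suc ?N]"
    unfolding roots sorted_list_of_multiset_mset by (rule sorted_sort_id)
  moreover have "map \<mu> [1..<Suc ?N] ! (k - 1) = \<mu> k"
  proof -
    have "k - 1 < length [1..<Suc ?N]" using k by auto
    then show ?thesis using k by (simp del: upt_Suc)
  qed
  ultimately show ?thesis unfolding eigval_def by simp
qed

lemma sum_eigval_eq_trace:
  fixes A :: "real^'n::finite^'n"
  assumes sym: "transpose A = A"
  shows "(\<Sum>k=1..CARD('n). eigval (of_real_matrix A) k) = trace A"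
proof -
  obtain q \<mu> where sd: "rayleigh_eigensystem CARD('n) A q \<mu>"
    using rayleigh_eigensystem_exists[OF sym] by blast
  obtain g :: "'n \<Rightarrow> nat" and P :: "real^'n^'n" where g: "bij_betw g UNIV {1..CARD('n)}"
    and PtP: "transpose P ** P = mat 1" and AP: "A = P ** diag_matrix (\<mu> \<circ> g) ** transpose P"
    using rayleigh_eigensystem_diagonalization[OF sd] by blast
  have "trace A = trace ((diag_matrix (\<mu> \<circ> g) ** transpose P) ** P)"
    using AP trace_mul_sym by (metis matrix_mul_assoc)
  also have "\<dots> = trace (diag_matrix (\<mu> \<circ> g))" by (simp only: matrix_mul_assoc[symmetric] PtP matrix_mul_rid)
  also have "\<dots> = (\<Sum>k=1..CARD('n). \<mu> k)"
    unfolding trace_def diag_matrix_def using sum.reindex_bij_betw[OF g, of \<mu>] by simp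
  also have "\<dots> = (\<Sum>k=1..CARD('n). eigval (of_real_matrix A) k)"
    using eigval_rayleigh_eigensystem[OF sd] by simp
  finally show ?thesis by simp
qed

lemma rayleigh_eigensystem_quadratic_le_on_span:
  fixes A :: "real^'n::finite^'n"
  assumes sd: "rayleigh_eigensystem CARD('n) A q \<mu>" and k: "k \<in> {1..CARD('n)}"
    and x: "x \<in> span (q ` {1..k})"
  shows "x \<bullet> (A *v x) \<le> \<mu> k * (x \<bullet> x)"
proof -
  have eig: "\<forall>i\<in>{1..CARD('n)}. A *v q i = \<mu> i *\<^sub>R q i"
    using sd unfolding rayleigh_eigensystem_def by auto
  have on: "orthonormal_on {1..k} q"
    using sd k unfolding rayleigh_eigensystem_def by (auto elim: orthonormal_on_subset)
  obtain u where "x = (\<Sum>v\<in>q ` {1..k}. u v *\<^sub>R v)" using x by (auto simp: span_finite)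
  moreover have "inj_on q {1..k}" using on by (rule orthonormal_on_inj)
  ultimately have x: "x = (\<Sum>i\<in>{1..k}. u (q i) *\<^sub>R q i)"
    using sum.reindex[of q "{1..k}" "\<lambda>v. u v *\<^sub>R v"] by simp
  have Ax: "A *v x = (\<Sum>i\<in>{1..k}. (u (q i) * \<mu> i) *\<^sub>R q i)"
    unfolding x using eig k by (simp add: vec.sum matrix_vector_mult_scaleR)
  have "x \<bullet> (A *v x) = (\<Sum>i\<in>{1..k}. u (q i) * (u (q i) * \<mu> i))"
    unfolding Ax by (subst x, rule inner_sum_orthonormal_on[OF on]) simp
  also have "\<dots> \<le> (\<Sum>i\<in>{1..k}. u (q i) * u (q i) * \<mu> k)"
  proof (rule sum_mono)
    fix i assume i: "i \<in> {1..k}"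
    have "\<mu> i \<le> \<mu> k" using rayleigh_eigensystem_sorted[OF sd, of i k] i k by auto
    then show "u (q i) * (u (q i) * \<mu> i) \<le> u (q i) * u (q i) * \<mu> k"
      by (simp add: mult.assoc[symmetric] mult_left_mono)
  qed
  also have "\<dots> = \<mu> k * (x \<bullet> x)"
  proof -
    have "x \<bullet> x = (\<Sum>i\<in>{1..k}. u (q i) * u (q i))"
      unfolding x by (rule inner_sum_orthonormal_on[OF on]) simp
    then show ?thesis by (simp add: sum_distrib_left algebra_simps)
  qed
  finally show ?thesis .
qed

lemma dim_add_le_dim_Int:
  fixes U W :: "(real^'n::finite) set"
  assumes "subspace U" "subspace W"
  shows "dim U + dim W \<le> CARD('n) + dim (U \<inter> W)"
proof -
  have "dim {x + y |x y. x \<in> U \<and> y \<in> W} + dim (U \<inter> W) = dim U + dim W"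
    by (rule dim_sums_Int[OF assms])
  moreover have "dim {x + y |x y. x \<in> U \<and> y \<in> W} \<le> CARD('n)" by (rule dim_subset_UNIV_cart)
  ultimately show ?thesis by linarith
qed

lemma rayleigh_eigensystem_le_if_quadratic_le_on_subspace:
  fixes A :: "real^'n::finite^'n"
  assumes sd: "rayleigh_eigensystem CARD('n) A q \<mu>" and k: "k \<in> {1..CARD('n)}"
    and U: "subspace U" and dU: "k \<le> dim U" and bound: "\<And>x. x \<in> U \<Longrightarrow> x \<bullet> (A *v x) \<le> t * (x \<bullet> x)"
  shows "\<mu> k \<le> t"
proof -
  have mini: "\<forall>x. norm x = 1 \<and> (\<forall>i\<in>{1..<k}. x \<bullet> q i = 0) \<longrightarrow> \<mu> k \<le> x \<bullet> (A *v x)"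
    using sd k unfolding rayleigh_eigensystem_def by auto
  have on: "orthonormal_on {1..<k} q"
    using sd k unfolding rayleigh_eigensystem_def by (auto elim: orthonormal_on_subset)
  define W where "W = {y::real^'n. \<forall>i\<in>{1..<k}. y \<bullet> q i = 0}"
  have W: "subspace W" unfolding W_def subspace_def by (auto simp: inner_add_left)
  have "dim W = CARD('n) - (k - 1)"
    unfolding W_def using dim_orthogonal_orthonormal_on[OF on] by simp
  then have "1 \<le> dim (U \<inter> W)" using dim_add_le_dim_Int[OF U W] dU k by auto
  then have "\<not> U \<inter> W \<subseteq> {0}" by (metis dim_eq_0 not_one_le_zero)
  then obtain x where xU: "x \<in> U" and xW: "x \<in> W" and x0: "x \<noteq> 0" by auto
  have "\<mu> k \<le> (x /\<^sub>R norm x) \<bullet> (A *v (x /\<^sub>R norm x))"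
    using mini[rule_format, of "x /\<^sub>R norm x"] xW x0 unfolding W_def by simp
  also have "\<dots> = (x \<bullet> (A *v x)) / (x \<bullet> x)" by (rule rayleigh_quotient_scaleR[OF x0])
  also have "\<dots> \<le> t" using bound[OF xU] x0 by (simp add: divide_le_eq)
  finally show ?thesis .
qed

lemma eigval_le_add_if_quadratic_le:
  fixes A B :: "real^'n::finite^'n"
  assumes sA: "transpose A = A" and sB: "transpose B = B"
    and le: "\<And>x. x \<bullet> (A *v x) \<le> x \<bullet> (B *v x) + c * (x \<bullet> x)" and k: "k \<in> {1..CARD('n)}"
  shows "eigval (of_real_matrix A) k \<le> eigval (of_real_matrix B) k + c"
proof -
  obtain qA \<mu>A where sdA: "rayleigh_eigensystem CARD('n) A qA \<mu>A"
    using rayleigh_eigensystem_exists[OF sA] by blast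
  obtain qB \<mu>B where sdB: "rayleigh_eigensystem CARD('n) B qB \<mu>B"
    using rayleigh_eigensystem_exists[OF sB] by blast
  have "orthonormal_on {1..k} qB"
    using sdB k unfolding rayleigh_eigensystem_def by (auto elim: orthonormal_on_subset)
  then have "k \<le> dim (span (qB ` {1..k}))" using dim_span_orthonormal_on[of "{1..k}" qB] by simp
  then have "\<mu>A k \<le> \<mu>B k + c"
  proof (rule rayleigh_eigensystem_le_if_quadratic_le_on_subspace[OF sdA k subspace_span])
    fix x assume "x \<in> span (qB ` {1..k})"
    then have "x \<bullet> (B *v x) \<le> \<mu>B k * (x \<bullet> x)"
      by (rule rayleigh_eigensystem_quadratic_le_on_span[OF sdB k])
    then show "x \<bullet> (A *v x) \<le> (\<mu>B k + c) * (x \<bullet> x)" using le[of x] by (simp add: algebra_simps)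
  qed
  then show ?thesis
    using eigval_rayleigh_eigensystem[OF sdA k] eigval_rayleigh_eigensystem[OF sdB k] by simp
qed

text \<open>Cauchy interlacing, for a perturbation supported at one coordinate.\<close>
lemma eigval_le_Suc_if_quadratic_le_on_hyperplane:
  fixes A B :: "real^'n::finite^'n"
  assumes sA: "transpose A = A" and sB: "transpose B = B"
    and le: "\<And>x. x $ w = 0 \<Longrightarrow> x \<bullet> (B *v x) \<le> x \<bullet> (A *v x)" and k: "1 \<le> k" "k < CARD('n)"
  shows "eigval (of_real_matrix B) k \<le> eigval (of_real_matrix A) (Suc k)"
proof -
  obtain qA \<mu>A where sdA: "rayleigh_eigensystem CARD('n) A qA \<mu>A"
    using rayleigh_eigensystem_exists[OF sA] by blast
  obtain qB \<mu>B where sdB: "rayleigh_eigensystem CARD('n) B qB \<mu>B"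
    using rayleigh_eigensystem_exists[OF sB] by blast
  have k1: "Suc k \<in> {1..CARD('n)}" and k0: "k \<in> {1..CARD('n)}" using k by auto
  define U where "U = span (qA ` {1..Suc k})"
  have U: "subspace U" unfolding U_def by simp
  define H where "H = {x::real^'n. axis w 1 \<bullet> x = 0}"
  have H: "subspace H" unfolding H_def by (rule subspace_hyperplane)
  have "dim H = CARD('n) - 1"
    unfolding H_def using dim_hyperplane[of "axis w (1::real)"] by (simp add: axis_eq_0_iff)
  moreover have "orthonormal_on {1..Suc k} qA"
    using sdA k1 unfolding rayleigh_eigensystem_def by (auto elim: orthonormal_on_subset)
  then have "dim U = Suc k" unfolding U_def using dim_span_orthonormal_on[of "{1..Suc k}" qA] by simp
  ultimately have "k \<le> dim (U \<inter> H)" using dim_add_le_dim_Int[OF U H] k by auto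
  then have "\<mu>B k \<le> \<mu>A (Suc k)"
  proof (rule rayleigh_eigensystem_le_if_quadratic_le_on_subspace[OF sdB k0 subspace_inter[OF U H]])
    fix x assume x: "x \<in> U \<inter> H"
    then have "x $ w = 0" unfolding H_def by (simp add: inner_axis')
    then have "x \<bullet> (B *v x) \<le> x \<bullet> (A *v x)" by (rule le)
    also have "\<dots> \<le> \<mu>A (Suc k) * (x \<bullet> x)"
      using x unfolding U_def by (intro rayleigh_eigensystem_quadratic_le_on_span[OF sdA k1]) simp
    finally show "x \<bullet> (B *v x) \<le> \<mu>A (Suc k) * (x \<bullet> x)" .
  qed
  then show ?thesis
    using eigval_rayleigh_eigensystem[OF sdA k1] eigval_rayleigh_eigensystem[OF sdB k0] by simp
qed

section \<open>Fiber operators of loop graphs\<close>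

definition edge_reversal :: "('e \<Rightarrow> 'e) \<Rightarrow> ('e \<Rightarrow> 'v) \<Rightarrow> ('e \<Rightarrow> 'v) \<Rightarrow> ('e \<Rightarrow> int^'d::finite) \<Rightarrow> bool" where
  "edge_reversal rv src tgt tau \<longleftrightarrow>
     (\<forall>e. rv (rv e) = e \<and> src (rv e) = tgt e \<and> tgt (rv e) = src e \<and> tau (rv e) = - tau e)"

lemma edge_reversal_if_periodic_graph_data:
  "periodic_graph_data src tgt rv tau \<Longrightarrow> edge_reversal rv src tgt tau"
  unfolding periodic_graph_data_def edge_reversal_def by auto

definition real_fiber_op ::
  "('e::finite \<Rightarrow> 'v::finite) \<Rightarrow> ('e \<Rightarrow> 'v) \<Rightarrow> ('e \<Rightarrow> int^'d::finite) \<Rightarrow> ('v \<Rightarrow> real)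
    \<Rightarrow> real^'d \<Rightarrow> real^'v^'v" where
  "real_fiber_op src tgt tau Q \<theta> = (\<chi> v u. (if v = u then 1 + Q v else 0)
      - (\<Sum>e\<in>{e. src e = v \<and> tgt e = u}. cos (ip (tau e) \<theta>)) / sqrt (real (deg src v) * real (deg src u)))"

definition bridge_potential :: "('e::finite \<Rightarrow> 'v) \<Rightarrow> ('e \<Rightarrow> int^'d::finite) \<Rightarrow> real^'d \<Rightarrow> 'v \<Rightarrow> real" where
  "bridge_potential src tau \<theta> v =
     (\<Sum>e\<in>{e. src e = v \<and> tau e \<noteq> 0}. 1 - cos (ip (tau e) \<theta>)) / real (deg src v)"

lemma ip_zero_left [simp]: "ip 0 \<theta> = 0"
  by (simp add: ip_def)

lemma ip_zero_right [simp]: "ip m 0 = 0"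
  by (simp add: ip_def)

lemma ip_uminus: "ip (- m) \<theta> = - ip m \<theta>"
  by (simp add: ip_def sum_negf)

lemma ip_scaleR: "ip m (t *\<^sub>R \<theta>) = t * ip m \<theta>"
  by (simp add: ip_def sum_distrib_left algebra_simps)

lemma sum_edges_reversed:
  assumes "edge_reversal rv src tgt tau"
  shows "(\<Sum>e\<in>{e. src e = u \<and> tgt e = v}. f e) = (\<Sum>e\<in>{e. src e = v \<and> tgt e = u}. f (rv e))"
  using assms unfolding edge_reversal_def by (intro sum.reindex_bij_witness[of _ rv rv]) auto

lemma sum_sin_ip_loop_graph:
  assumes rev: "edge_reversal rv src tgt tau" and loop: "is_loop_graph src tgt tau"
  shows "(\<Sum>e\<in>{e. src e = v \<and> tgt e = u}. sin (ip (tau e) \<theta>)) = 0"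
proof (cases "v = u")
  case True
  have "(\<Sum>e\<in>{e. src e = v \<and> tgt e = u}. sin (ip (tau e) \<theta>))
      = (\<Sum>e\<in>{e. src e = u \<and> tgt e = v}. sin (ip (tau (rv e)) \<theta>))"
    by (rule sum_edges_reversed[OF rev])
  also have "\<dots> = - (\<Sum>e\<in>{e. src e = v \<and> tgt e = u}. sin (ip (tau e) \<theta>))"
    using rev True unfolding edge_reversal_def by (simp add: ip_uminus sum_negf)
  finally show ?thesis by simp
next
  case False
  then have "tau e = 0" if "src e = v" "tgt e = u" for e
    using loop that unfolding is_loop_graph_def by auto
  then show ?thesis by simp
qed

lemma fiber_op_eq_of_real_matrix:
  assumes rev: "edge_reversal rv src tgt tau" and loop: "is_loop_graph src tgt tau"
  shows "fiber_op src tgt tau Q \<theta> = of_real_matrix (real_fiber_op src tgt tau Q \<theta>)"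
proof (rule matrix_eqI)
  fix v u
  have "Re (fiber_op src tgt tau Q \<theta> $ v $ u) = real_fiber_op src tgt tau Q \<theta> $ v $ u"
    unfolding fiber_op_def real_fiber_op_def by (simp add: Re_divide_of_real sum_divide_distrib)
  moreover have "Im (fiber_op src tgt tau Q \<theta> $ v $ u)
      = - (\<Sum>e\<in>{e. src e = v \<and> tgt e = u}. sin (ip (tau e) \<theta>)) / sqrt (real (deg src v) * real (deg src u))"
    unfolding fiber_op_def by (simp add: Im_divide_of_real sum_divide_distrib)
  ultimately show "fiber_op src tgt tau Q \<theta> $ v $ u = of_real_matrix (real_fiber_op src tgt tau Q \<theta>) $ v $ u"
    using sum_sin_ip_loop_graph[OF rev loop] by (intro complex_eqI) (simp_all add: of_real_matrix_def)
qed

lemma band_fun_eq_eigval: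
  assumes "edge_reversal rv src tgt tau" and "is_loop_graph src tgt tau"
  shows "band_fun src tgt tau Q n \<theta> = eigval (of_real_matrix (real_fiber_op src tgt tau Q \<theta>)) n"
  unfolding band_fun_def fiber_op_eq_of_real_matrix[OF assms] ..

lemma real_fiber_op_symmetric:
  assumes rev: "edge_reversal rv src tgt tau"
  shows "transpose (real_fiber_op src tgt tau Q \<theta>) = real_fiber_op src tgt tau Q \<theta>"
proof (rule matrix_eqI)
  fix v u
  have "(\<Sum>e\<in>{e. src e = u \<and> tgt e = v}. cos (ip (tau e) \<theta>))
      = (\<Sum>e\<in>{e. src e = v \<and> tgt e = u}. cos (ip (tau (rv e)) \<theta>))"
    by (rule sum_edges_reversed[OF rev])
  also have "\<dots> = (\<Sum>e\<in>{e. src e = v \<and> tgt e = u}. cos (ip (tau e) \<theta>))"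
    using rev unfolding edge_reversal_def by (simp add: ip_uminus)
  finally show "transpose (real_fiber_op src tgt tau Q \<theta>) $ v $ u = real_fiber_op src tgt tau Q \<theta> $ v $ u"
    unfolding real_fiber_op_def transpose_def by (simp add: mult.commute)
qed

lemma real_fiber_op_eq_add_diag:
  assumes loop: "is_loop_graph src tgt tau"
  shows "real_fiber_op src tgt tau Q \<theta>
    = real_fiber_op src tgt tau Q 0 + diag_matrix (bridge_potential src tau \<theta>)"
proof (rule matrix_eqI)
  fix v u
  show "real_fiber_op src tgt tau Q \<theta> $ v $ u
      = (real_fiber_op src tgt tau Q 0 + diag_matrix (bridge_potential src tau \<theta>)) $ v $ u"
  proof (cases "v = u")
    case False
    then have "tau e = 0" if "src e = v" "tgt e = u" for e
      using loop that unfolding is_loop_graph_def by auto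
    then have "(\<Sum>e\<in>{e. src e = v \<and> tgt e = u}. cos (ip (tau e) \<theta>))
        = (\<Sum>e\<in>{e. src e = v \<and> tgt e = u}. cos (ip (tau e) 0))" by (intro sum.cong) auto
    then show ?thesis using False unfolding real_fiber_op_def diag_matrix_def by simp
  next
    case True
    let ?L = "{e. src e = v \<and> tgt e = v}"
    let ?B = "{e. src e = v \<and> tau e \<noteq> 0}"
    have "?B \<subseteq> ?L" using loop unfolding is_loop_graph_def by auto
    then have "(\<Sum>e\<in>?L. 1 - cos (ip (tau e) \<theta>)) = (\<Sum>e\<in>?B. 1 - cos (ip (tau e) \<theta>))"
      by (intro sum.mono_neutral_right) auto
    then have "(\<Sum>e\<in>?L. cos (ip (tau e) \<theta>))
        = (\<Sum>e\<in>?L. cos (ip (tau e) 0)) - (\<Sum>e\<in>?B. 1 - cos (ip (tau e) \<theta>))"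
      by (simp add: sum_subtractf)
    then show ?thesis
      using True unfolding real_fiber_op_def diag_matrix_def bridge_potential_def
      by (simp add: diff_divide_distrib)
  qed
qed

lemma inner_real_fiber_op:
  assumes "is_loop_graph src tgt tau"
  shows "x \<bullet> (real_fiber_op src tgt tau Q \<theta> *v x)
    = x \<bullet> (real_fiber_op src tgt tau Q 0 *v x) + (\<Sum>v\<in>UNIV. bridge_potential src tau \<theta> v * (x $ v * x $ v))"
  by (subst real_fiber_op_eq_add_diag[OF assms]) (rule inner_add_diag_matrix)

lemma bridge_potential_nonneg: "0 \<le> bridge_potential src tau \<theta> v"
  unfolding bridge_potential_def by (intro divide_nonneg_nonneg sum_nonneg) auto

lemma bridge_potential_zero [simp]: "bridge_potential src tau 0 v = 0"
  unfolding bridge_potential_def by simp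

lemma bridge_potential_le_exact:
  assumes "exact_quasimomentum tau \<theta>0"
  shows "bridge_potential src tau \<theta> v \<le> bridge_potential src tau \<theta>0 v"
  using assms unfolding bridge_potential_def exact_quasimomentum_def
  by (intro divide_right_mono sum_mono) auto

lemma bridge_potential_exact:
  assumes "exact_quasimomentum tau \<theta>0"
  shows "bridge_potential src tau \<theta>0 v = 2 * real (card {e. src e = v \<and> tau e \<noteq> 0}) / real (deg src v)"
proof -
  have "(\<Sum>e\<in>{e. src e = v \<and> tau e \<noteq> 0}. 1 - cos (ip (tau e) \<theta>0)) = (\<Sum>e\<in>{e. src e = v \<and> tau e \<noteq> 0}. 2)"
    using assms unfolding exact_quasimomentum_def by (intro sum.cong) auto
  then show ?thesis unfolding bridge_potential_def by simp
qed

section \<open>Spectral bands\<close>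

lemma band_fun_le_add:
  fixes src tgt :: "'e::finite \<Rightarrow> 'v::finite" and tau :: "'e \<Rightarrow> int^'d::finite"
  assumes rev: "edge_reversal rv src tgt tau" and loop: "is_loop_graph src tgt tau"
    and n: "n \<in> {1..CARD('v)}"
    and le: "\<And>v. bridge_potential src tau \<theta> v \<le> bridge_potential src tau \<theta>' v + c"
  shows "band_fun src tgt tau Q n \<theta> \<le> band_fun src tgt tau Q n \<theta>' + c"
proof -
  have "x \<bullet> (real_fiber_op src tgt tau Q \<theta> *v x) \<le> x \<bullet> (real_fiber_op src tgt tau Q \<theta>' *v x) + c * (x \<bullet> x)"
    for x :: "real^'v"
  proof -
    have "(\<Sum>v\<in>UNIV. bridge_potential src tau \<theta> v * (x $ v * x $ v))
        \<le> (\<Sum>v\<in>UNIV. (bridge_potential src tau \<theta>' v + c) * (x $ v * x $ v))"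
      by (intro sum_mono mult_right_mono le) simp
    also have "\<dots> = (\<Sum>v\<in>UNIV. bridge_potential src tau \<theta>' v * (x $ v * x $ v)) + c * (x \<bullet> x)"
      by (simp add: inner_vec_def algebra_simps sum.distrib sum_distrib_left)
    finally show ?thesis
      using inner_real_fiber_op[OF loop, where x = x and \<theta> = \<theta> and Q = Q]
        inner_real_fiber_op[OF loop, where x = x and \<theta> = \<theta>' and Q = Q] by simp
  qed
  then show ?thesis
    unfolding band_fun_eq_eigval[OF rev loop]
    by (rule eigval_le_add_if_quadratic_le[OF real_fiber_op_symmetric[OF rev] real_fiber_op_symmetric[OF rev] _ n])
qed

lemma band_fun_mono:
  fixes src tgt :: "'e::finite \<Rightarrow> 'v::finite" and tau :: "'e \<Rightarrow> int^'d::finite"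
  assumes "edge_reversal rv src tgt tau" and "is_loop_graph src tgt tau" and "n \<in> {1..CARD('v)}"
    and "\<And>v. bridge_potential src tau \<theta> v \<le> bridge_potential src tau \<theta>' v"
  shows "band_fun src tgt tau Q n \<theta> \<le> band_fun src tgt tau Q n \<theta>'"
  using band_fun_le_add[OF assms(1-3), of \<theta> \<theta>' 0] assms(4) by simp

lemma isCont_if_abs_diff_le:
  fixes g h :: "real \<Rightarrow> real"
  assumes "\<And>t. \<bar>g t - g s\<bar> \<le> h t" and "isCont h s" and "h s = 0"
  shows "isCont g s"
proof -
  have "((\<lambda>t. g t - g s) \<longlongrightarrow> 0) (at s)"
  proof (rule Lim_null_comparison)
    show "\<forall>\<^sub>F x in at s. norm (g x - g s) \<le> h x" using assms(1) by simp
    show "(h \<longlongrightarrow> 0) (at s)" using assms(2,3) unfolding isCont_def by simp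
  qed
  then show ?thesis unfolding isCont_def by (simp add: LIM_zero_iff)
qed

lemma continuous_on_band_fun_segment:
  fixes src tgt :: "'e::finite \<Rightarrow> 'v::finite" and tau :: "'e \<Rightarrow> int^'d::finite"
  assumes rev: "edge_reversal rv src tgt tau" and loop: "is_loop_graph src tgt tau"
    and n: "n \<in> {1..CARD('v)}"
  shows "continuous_on S (\<lambda>t. band_fun src tgt tau Q n (t *\<^sub>R \<theta>0))"
proof (rule continuous_at_imp_continuous_on, intro ballI)
  fix s
  let ?g = "\<lambda>t. band_fun src tgt tau Q n (t *\<^sub>R \<theta>0)"
  let ?\<delta> = "\<lambda>t. bridge_potential src tau (t *\<^sub>R \<theta>0)"
  let ?h = "\<lambda>t. \<Sum>v\<in>UNIV. \<bar>?\<delta> t v - ?\<delta> s v\<bar>"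
  show "isCont ?g s"
  proof (rule isCont_if_abs_diff_le)
    fix t
    have le: "?\<delta> t v \<le> ?\<delta> s v + ?h t" "?\<delta> s v \<le> ?\<delta> t v + ?h t" for v
      using member_le_sum[of v UNIV "\<lambda>v. \<bar>?\<delta> t v - ?\<delta> s v\<bar>"] by auto
    have "?g t \<le> ?g s + ?h t" and "?g s \<le> ?g t + ?h t"
      by (rule band_fun_le_add[OF rev loop n le(1)], rule band_fun_le_add[OF rev loop n le(2)])
    then show "\<bar>?g t - ?g s\<bar> \<le> ?h t" by simp
  next
    show "isCont ?h s"
      unfolding bridge_potential_def ip_scaleR divide_inverse by (intro continuous_intros)
  qed simp
qed

lemma band_min_eq_band_fun_zero:
  fixes src tgt :: "'e::finite \<Rightarrow> 'v::finite" and tau :: "'e \<Rightarrow> int^'d::finite"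
  assumes rev: "edge_reversal rv src tgt tau" and loop: "is_loop_graph src tgt tau"
    and n: "n \<in> {1..CARD('v)}"
  shows "band_min src tgt tau Q n = band_fun src tgt tau Q n 0"
  unfolding band_min_def band_def
  by (rule cInf_eq_minimum)
    (auto intro: band_fun_mono[OF rev loop n] simp: bridge_potential_nonneg)

lemma band_eq_Icc_exact:
  fixes src tgt :: "'e::finite \<Rightarrow> 'v::finite" and tau :: "'e \<Rightarrow> int^'d::finite"
  assumes rev: "edge_reversal rv src tgt tau" and loop: "is_loop_graph src tgt tau"
    and n: "n \<in> {1..CARD('v)}" and ex: "exact_quasimomentum tau \<theta>0"
  shows "band src tgt tau Q n = {band_fun src tgt tau Q n 0 .. band_fun src tgt tau Q n \<theta>0}"
proof
  show "band src tgt tau Q n \<subseteq> {band_fun src tgt tau Q n 0 .. band_fun src tgt tau Q n \<theta>0}"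
    unfolding band_def using bridge_potential_le_exact[OF ex]
    by (auto intro!: band_fun_mono[OF rev loop n] simp: bridge_potential_nonneg)
  show "{band_fun src tgt tau Q n 0 .. band_fun src tgt tau Q n \<theta>0} \<subseteq> band src tgt tau Q n"
  proof
    fix y assume "y \<in> {band_fun src tgt tau Q n 0 .. band_fun src tgt tau Q n \<theta>0}"
    then have "\<exists>t\<ge>0. t \<le> 1 \<and> band_fun src tgt tau Q n (t *\<^sub>R \<theta>0) = y"
      using continuous_on_band_fun_segment[OF rev loop n] by (intro IVT') auto
    then show "y \<in> band src tgt tau Q n" unfolding band_def by auto
  qed
qed

lemma band_max_eq_band_fun_exact:
  fixes src tgt :: "'e::finite \<Rightarrow> 'v::finite" and tau :: "'e \<Rightarrow> int^'d::finite"
  assumes rev: "edge_reversal rv src tgt tau" and loop: "is_loop_graph src tgt tau"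
    and n: "n \<in> {1..CARD('v)}" and ex: "exact_quasimomentum tau \<theta>0"
  shows "band_max src tgt tau Q n = band_fun src tgt tau Q n \<theta>0"
  unfolding band_max_def band_eq_Icc_exact[OF assms]
  using band_fun_mono[OF rev loop n bridge_potential_le_exact[OF ex]] by simp

lemma sum_measure_band_exact:
  fixes src tgt :: "'e::finite \<Rightarrow> 'v::finite" and tau :: "'e \<Rightarrow> int^'d::finite"
  assumes rev: "edge_reversal rv src tgt tau" and loop: "is_loop_graph src tgt tau"
    and ex: "exact_quasimomentum tau \<theta>0"
  shows "(\<Sum>n=1..CARD('v). measure lborel (band src tgt tau Q n)) = 2 * beta_const src tau"
proof -
  let ?bf = "band_fun src tgt tau Q" and ?R = "real_fiber_op src tgt tau Q"
  have "(\<Sum>n=1..CARD('v). measure lborel (band src tgt tau Q n)) = (\<Sum>n=1..CARD('v). ?bf n \<theta>0 - ?bf n 0)"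
    using band_eq_Icc_exact[OF rev loop _ ex] band_fun_mono[OF rev loop _ bridge_potential_le_exact[OF ex]]
    by (intro sum.cong) (auto simp: measure_lborel_Icc)
  also have "\<dots> = trace (?R \<theta>0) - trace (?R 0)"
    unfolding sum_subtractf band_fun_eq_eigval[OF rev loop]
    by (simp only: sum_eigval_eq_trace[OF real_fiber_op_symmetric[OF rev]])
  also have "\<dots> = (\<Sum>v\<in>UNIV. bridge_potential src tau \<theta>0 v)"
    by (subst real_fiber_op_eq_add_diag[OF loop]) (simp add: trace_add trace_def diag_matrix_def sum.distrib)
  also have "\<dots> = 2 * beta_const src tau"
    unfolding beta_const_def bridge_potential_exact[OF ex] by (simp add: sum_distrib_left)
  finally show ?thesis .
qed

lemma band_fun_exact_le_Suc_zero:
  fixes src tgt :: "'e::finite \<Rightarrow> 'v::finite" and tau :: "'e \<Rightarrow> int^'d::finite"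
  assumes rev: "edge_reversal rv src tgt tau" and loop: "is_loop_graph src tgt tau"
    and w: "\<And>e. tau e \<noteq> 0 \<Longrightarrow> src e = w" and n: "1 \<le> n" "n < CARD('v)"
  shows "band_fun src tgt tau Q n \<theta> \<le> band_fun src tgt tau Q (Suc n) 0"
proof -
  have zero: "bridge_potential src tau \<theta> v = 0" if "v \<noteq> w" for v
  proof -
    have "{e. src e = v \<and> tau e \<noteq> 0} = {}" using w that by auto
    then show ?thesis unfolding bridge_potential_def by simp
  qed
  have "x \<bullet> (real_fiber_op src tgt tau Q \<theta> *v x) \<le> x \<bullet> (real_fiber_op src tgt tau Q 0 *v x)"
    if "x $ w = 0" for x :: "real^'v"
  proof -
    have "(\<Sum>v\<in>UNIV. bridge_potential src tau \<theta> v * (x $ v * x $ v)) = 0"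
      by (rule sum.neutral) (metis zero that mult_zero_left mult_zero_right)
    then show ?thesis using inner_real_fiber_op[OF loop, where x = x and \<theta> = \<theta> and Q = Q] by simp
  qed
  then show ?thesis
    unfolding band_fun_eq_eigval[OF rev loop]
    by (rule eigval_le_Suc_if_quadratic_le_on_hyperplane[OF real_fiber_op_symmetric[OF rev]
          real_fiber_op_symmetric[OF rev] _ n])
qed

lemma measure_UN_Icc_chain:
  fixes a b :: "nat \<Rightarrow> real"
  assumes ab: "\<And>n. 1 \<le> n \<Longrightarrow> n \<le> m \<Longrightarrow> a n \<le> b n"
    and ba: "\<And>n. 1 \<le> n \<Longrightarrow> n < m \<Longrightarrow> b n \<le> a (Suc n)"
  shows "measure lborel (\<Union>n\<in>{1..m}. {a n..b n}) = (\<Sum>n=1..m. b n - a n)"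
  using ab ba
proof (induction m)
  case 0 then show ?case by simp
next
  case (Suc m)
  define X where "X = (\<Union>n\<in>{1..m}. {a n..b n})"
  define Y where "Y = {a (Suc m)..b (Suc m)}"
  have b_le: "b n \<le> b m" if "1 \<le> n" "n \<le> m" for n
    using that(2,1)
  proof (induction m rule: dec_induct)
    case (step k)
    then show ?case using Suc.prems[of k] Suc.prems[of "Suc k"] by simp
  qed simp
  have XY: "X \<inter> Y \<subseteq> {a (Suc m)}"
  proof
    fix x assume x: "x \<in> X \<inter> Y"
    then obtain n where n: "n \<in> {1..m}" "x \<in> {a n..b n}" unfolding X_def by auto
    then have "x \<le> b m" using b_le[of n] by auto
    also have "b m \<le> a (Suc m)" using Suc.prems n by auto
    finally show "x \<in> {a (Suc m)}" using x unfolding Y_def by auto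
  qed
  have "AE x in lborel. x \<notin> X \<or> x \<notin> Y"
    using AE_lborel_singleton[of "a (Suc m)"] by eventually_elim (use XY in auto)
  moreover have "X \<in> fmeasurable lborel" unfolding X_def
    by (intro fmeasurable_compact compact_UN) auto
  moreover have "Y \<in> fmeasurable lborel" unfolding Y_def by (intro fmeasurable_compact) auto
  ultimately have "measure lborel (X \<union> Y) = measure lborel X + measure lborel Y" by (rule measure_Un_AE)
  moreover have "(\<Union>n\<in>{1..Suc m}. {a n..b n}) = X \<union> Y" unfolding X_def Y_def
    by (auto simp: atLeastAtMostSuc_conv)
  moreover have "measure lborel Y = b (Suc m) - a (Suc m)" unfolding Y_def
    using Suc.prems by (simp add: measure_lborel_Icc)
  moreover have "measure lborel X = (\<Sum>n=1..m. b n - a n)"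
    unfolding X_def using Suc.prems by (intro Suc.IH) auto
  ultimately show ?case by simp
qed

lemma measure_spectrum_H_single_bridge_vertex:
  fixes src tgt :: "'e::finite \<Rightarrow> 'v::finite" and tau :: "'e \<Rightarrow> int^'d::finite"
  assumes rev: "edge_reversal rv src tgt tau" and loop: "is_loop_graph src tgt tau"
    and ex: "exact_quasimomentum tau \<theta>0" and w: "\<And>e. tau e \<noteq> 0 \<Longrightarrow> src e = w"
  shows "measure lborel (spectrum_H src tgt tau Q) = (\<Sum>n=1..CARD('v). measure lborel (band src tgt tau Q n))"
proof -
  let ?bf = "band_fun src tgt tau Q"
  have le: "?bf n 0 \<le> ?bf n \<theta>0" if "n \<in> {1..CARD('v)}" for n
    using band_fun_mono[OF rev loop that bridge_potential_le_exact[OF ex]] .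
  have "spectrum_H src tgt tau Q = (\<Union>n\<in>{1..CARD('v)}. {?bf n 0 .. ?bf n \<theta>0})"
    unfolding spectrum_H_def using band_eq_Icc_exact[OF rev loop _ ex] by auto
  then have "measure lborel (spectrum_H src tgt tau Q) = (\<Sum>n=1..CARD('v). ?bf n \<theta>0 - ?bf n 0)"
    using measure_UN_Icc_chain[of "CARD('v)" "\<lambda>n. ?bf n 0" "\<lambda>n. ?bf n \<theta>0"]
      le band_fun_exact_le_Suc_zero[OF rev loop w] by simp
  also have "\<dots> = (\<Sum>n=1..CARD('v). measure lborel (band src tgt tau Q n))"
    using band_eq_Icc_exact[OF rev loop _ ex] le by (intro sum.cong) (auto simp: measure_lborel_Icc)
  finally show ?thesis .
qed

theorem theorem2p3:
  fixes src tgt :: "'e::finite \<Rightarrow> 'v::finite"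
    and rv :: "'e \<Rightarrow> 'e"
    and tau :: "'e \<Rightarrow> int^'d::finite"
    and Q :: "'v \<Rightarrow> real"
  assumes d2: "CARD('d) \<ge> 2"
    and G: "periodic_graph_data src tgt rv tau"
  shows "(is_loop_graph src tgt tau \<longrightarrow>
           (\<forall>n\<in>{1..CARD('v)}. band_min src tgt tau Q n = band_fun src tgt tau Q n 0))
    \<and> (\<forall>\<theta>0. is_loop_graph src tgt tau \<longrightarrow> exact_quasimomentum tau \<theta>0 \<longrightarrow>
           (\<forall>n\<in>{1..CARD('v)}.
              band src tgt tau Q n = {band_min src tgt tau Q n .. band_max src tgt tau Q n}
            \<and> band src tgt tau Q n = {band_fun src tgt tau Q n 0 .. band_fun src tgt tau Q n \<theta>0})
           \<and> (\<Sum>n=1..CARD('v). measure lborel (band src tgt tau Q n)) = 2 * beta_const src tau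
           \<and> ((\<exists>v. \<forall>e. tau e \<noteq> 0 \<longrightarrow> src e = v \<and> tgt e = v) \<longrightarrow>
                measure lborel (spectrum_H src tgt tau Q)
                  = (\<Sum>n=1..CARD('v). measure lborel (band src tgt tau Q n))
              \<and> measure lborel (spectrum_H src tgt tau Q) = 2 * beta_const src tau))"
proof (intro conjI impI allI ballI)
  have rev: "edge_reversal rv src tgt tau"
    using G by (rule edge_reversal_if_periodic_graph_data)
  {
    fix n assume loop: "is_loop_graph src tgt tau" and n: "n \<in> {1..CARD('v)}"
    then show "band_min src tgt tau Q n = band_fun src tgt tau Q n 0"
      by (rule band_min_eq_band_fun_zero[OF rev])
  }
  fix \<theta>0 assume loop: "is_loop_graph src tgt tau" and ex: "exact_quasimomentum tau \<theta>0"
  {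
    fix n assume n: "n \<in> {1..CARD('v)}"
    show "band src tgt tau Q n = {band_fun src tgt tau Q n 0 .. band_fun src tgt tau Q n \<theta>0}"
      by (rule band_eq_Icc_exact[OF rev loop n ex])
    then show "band src tgt tau Q n = {band_min src tgt tau Q n .. band_max src tgt tau Q n}"
      by (simp add: band_min_eq_band_fun_zero[OF rev loop n] band_max_eq_band_fun_exact[OF rev loop n ex])
  }
  show sum_bands: "(\<Sum>n=1..CARD('v). measure lborel (band src tgt tau Q n)) = 2 * beta_const src tau"
    by (rule sum_measure_band_exact[OF rev loop ex])
  assume "\<exists>v. \<forall>e. tau e \<noteq> 0 \<longrightarrow> src e = v \<and> tgt e = v"
  then obtain w where "\<And>e. tau e \<noteq> 0 \<Longrightarrow> src e = w" by blast
  then show "measure lborel (spectrum_H src tgt tau Q)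
      = (\<Sum>n=1..CARD('v). measure lborel (band src tgt tau Q n))"
    by (rule measure_spectrum_H_single_bridge_vertex[OF rev loop ex])
  then show "measure lborel (spectrum_H src tgt tau Q) = 2 * beta_const src tau"
    using sum_bands by simp
qed

end
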